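(* For $\lambda>0$ let $N_\lambda$ be a Poisson random variable with parameter $\lambda$. Then $$\inf_{\lambda>0}P\left\{|N_\lambda-E[N_\lambda]|<\sqrt{\mathrm{Var}(N_\lambda)}\right\}=P\left\{|N_1-E[N_1]|<\sqrt{\mathrm{Var}(N_1)}\right\}=e^{-1}.$$ Consequently, with $\mathcal I_0$ the set of all infinitely divisible real random variables $X$ with $E[X^2]<\infty$ and $\mathrm{Var}(X)>0$, and $P_{\mathcal I_0}=\inf_{X\in\mathcal I_0}P\{|X-E[X]|<\sqrt{\mathrm{Var}(X)}\}$, we have $P_{\mathcal I_0}\le e^{-1}$.
   Context: A real random variable is infinitely divisible if for every $n\ge1$ its distribution equals that of a sum of $n$ i.i.d. random variables. *)

theory Defs
  imports "HOL-Probability.Probability"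
begin

text \<open>A law (Borel probability measure on the reals) is infinitely divisible if for every
  n \<ge> 1 it is the distribution of a sum of n i.i.d. real random variables; we use the
  canonical realisation of n i.i.d. variables with common law \<nu> as the coordinates of the
  product measure.\<close>
definition inf_divisible :: "real measure \<Rightarrow> bool" where
  "inf_divisible \<mu> \<longleftrightarrow> prob_space \<mu> \<and> sets \<mu> = sets borel \<and>
     (\<forall>n::nat\<ge>1. \<exists>\<nu>. prob_space \<nu> \<and> sets \<nu> = sets borel \<and>
        \<mu> = distr (PiM {..<n} (\<lambda>_. \<nu>)) borel (\<lambda>x. \<Sum>i<n. x i))"

definition poisson_conc :: "real \<Rightarrow> real" where
  "poisson_conc l = measure_pmf.prob (poisson_pmf l)
     {k. \<bar>real k - measure_pmf.expectation (poisson_pmf l) real\<bar>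
           < sqrt (measure_pmf.variance (poisson_pmf l) real)}"

definition I0 :: "real measure set" where
  "I0 = {\<mu>. inf_divisible \<mu> \<and> integrable \<mu> (\<lambda>x. x\<^sup>2) \<and>
              prob_space.variance \<mu> (\<lambda>x. x) > 0}"

definition P_I0 :: real where
  "P_I0 = Inf ((\<lambda>\<mu>. measure \<mu> {x. \<bar>x - prob_space.expectation \<mu> (\<lambda>x. x)\<bar>
                     < sqrt (prob_space.variance \<mu> (\<lambda>x. x))}) ` I0)"

end

theory Submission
  imports Defs
begin

(* Mean and variance of Poisson(l) are both l, so poisson_conc l is the Poisson(l) mass of the
   window of integers k with |k - l| < sqrt l. For l < 1 the window is {0}, of mass e^-l > e^-1;
   for l = 1 it is {1}, of mass exactly e^-1. For 1 < l < 6 the window mass e^-l * sum l^k / k!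
   is bounded below on short intervals of l by exact rational computations. For l >= 6 the ratio
   p(k+1) / p(k) = l / (k+1) makes both tails outside the window geometric, each at most sqrt l
   times the adjacent boundary mass, while unimodality puts at least sqrt l - 1 times each boundary
   mass inside the window; as sqrt l / (sqrt l - 1) <= e - 1, the window carries at least 1/e of
   the total mass. Finally Poisson(1) is the law of a sum of n i.i.d. Poisson(1/n) variables for
   every n and has variance 1, so it lies in I0 and P_I0 <= e^-1. *)

lemma expectation_nat_pmf_sums:
  fixes p :: "nat pmf" and f :: "nat \<Rightarrow> real"
  assumes sums: "(\<lambda>k. pmf p k * f k) sums s" and nonneg: "\<And>k. f k \<ge> 0"
  shows "integrable (measure_pmf p) f" "measure_pmf.expectation p f = s"
proof -
  have int: "integrable (count_space UNIV) (\<lambda>k. pmf p k * f k)"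
    using sums nonneg unfolding integrable_count_space_nat_iff by (simp add: sums_iff)
  then show "integrable (measure_pmf p) f"
    unfolding measure_pmf_eq_density by (subst integrable_density) (auto simp: mult_ac)
  have "measure_pmf.expectation p f = (\<integral>k. pmf p k * f k \<partial>count_space UNIV)"
    unfolding measure_pmf_eq_density by (subst integral_density) auto
  also have "\<dots> = s"
    using int sums by (subst integral_count_space_nat) (simp_all add: sums_iff)
  finally show "measure_pmf.expectation p f = s" .
qed

lemma pmf_poisson_Suc:
  assumes "l > 0"
  shows "real (Suc k) * pmf (poisson_pmf l) (Suc k) = l * pmf (poisson_pmf l) k"
  using assms by (simp add: field_simps del: of_nat_Suc)

lemma poisson_pmf_sums:
  fixes l :: real
  assumes l: "l > 0"
  shows "(\<lambda>k. pmf (poisson_pmf l) k) sums 1"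
    and "(\<lambda>k. pmf (poisson_pmf l) k * real k) sums l"
    and "(\<lambda>k. pmf (poisson_pmf l) k * (real k)\<^sup>2) sums (l\<^sup>2 + l)"
proof -
  let ?p = "pmf (poisson_pmf l)"
  have "(\<lambda>k. exp (-l) * (l ^ k / fact k)) sums (exp (-l) * exp l)"
    using exp_converges[of l] by (intro sums_mult) (simp add: divide_inverse mult_ac scaleR_conv_of_real)
  then show mass: "(\<lambda>k. ?p k) sums 1"
    using l by (simp add: exp_minus field_simps)
  have shift1: "?p (Suc k) * real (Suc k) = l * ?p k" for k
    using pmf_poisson_Suc[OF l] by (simp only: mult.commute)
  have "(\<lambda>k. ?p (Suc k) * real (Suc k)) sums l"
    unfolding shift1 using sums_mult[OF mass, of l] by simp
  from sums_Suc_iff[THEN iffD1, OF this]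
  show mean: "(\<lambda>k. ?p k * real k) sums l"
    by simp
  have shift2: "?p (Suc k) * (real (Suc k))\<^sup>2 = l * (?p k * real k + ?p k)" for k
    unfolding power2_eq_square mult.assoc[symmetric] shift1 by (simp add: algebra_simps)
  have "(\<lambda>k. ?p (Suc k) * (real (Suc k))\<^sup>2) sums (l * (l + 1))"
    unfolding shift2 by (intro sums_mult sums_add mass mean)
  from sums_Suc_iff[THEN iffD1, OF this]
  show "(\<lambda>k. ?p k * (real k)\<^sup>2) sums (l\<^sup>2 + l)"
    by (simp add: power2_eq_square algebra_simps)
qed

lemma
  fixes l :: real
  assumes l: "l > 0"
  shows integrable_poisson_pmf: "integrable (measure_pmf (poisson_pmf l)) real"
    and integrable_poisson_pmf_square: "integrable (measure_pmf (poisson_pmf l)) (\<lambda>k. (real k)\<^sup>2)"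
    and expectation_poisson_pmf: "measure_pmf.expectation (poisson_pmf l) real = l"
    and expectation_poisson_pmf_square:
      "measure_pmf.expectation (poisson_pmf l) (\<lambda>k. (real k)\<^sup>2) = l\<^sup>2 + l"
  using expectation_nat_pmf_sums[OF poisson_pmf_sums(2)[OF l]]
    expectation_nat_pmf_sums[OF poisson_pmf_sums(3)[OF l]] by auto

lemma variance_poisson_pmf:
  assumes "l > 0"
  shows "measure_pmf.variance (poisson_pmf l) real = l"
  using assms
  by (subst measure_pmf.variance_eq)
    (simp_all add: integrable_poisson_pmf integrable_poisson_pmf_square
      expectation_poisson_pmf expectation_poisson_pmf_square)

definition poisson_window :: "real \<Rightarrow> nat set" where
  "poisson_window l = {k. \<bar>real k - l\<bar> < sqrt l}"

lemma finite_poisson_window: "finite (poisson_window l)"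
proof (rule finite_subset)
  show "poisson_window l \<subseteq> {..nat \<lceil>l + sqrt l\<rceil>}"
    unfolding poisson_window_def by (auto, linarith)
qed simp

lemma poisson_conc_eq_sum:
  assumes "l > 0"
  shows "poisson_conc l = (\<Sum>k\<in>poisson_window l. pmf (poisson_pmf l) k)"
  unfolding poisson_conc_def variance_poisson_pmf[OF assms]
  unfolding expectation_poisson_pmf[OF assms] poisson_window_def[symmetric]
  by (rule measure_measure_pmf_finite[OF finite_poisson_window])

lemma poisson_conc_one: "poisson_conc 1 = exp (-1)"
proof -
  have "poisson_window 1 = {1}"
    unfolding poisson_window_def by (auto simp: abs_less_iff)
  then show ?thesis
    by (simp add: poisson_conc_eq_sum)
qed

lemma sum_poisson_le_poisson_conc:
  assumes "l > 0" "A \<subseteq> poisson_window l"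
  shows "(\<Sum>k\<in>A. pmf (poisson_pmf l) k) \<le> poisson_conc l"
  unfolding poisson_conc_eq_sum[OF assms(1)]
  by (rule sum_mono2[OF finite_poisson_window assms(2)]) simp

lemma exp_minus_one_le_poisson_conc_if_window:
  assumes l: "l > 0" and window: "{lo..hi} \<subseteq> poisson_window l"
    and exp_le: "exp (l - 1) \<le> (\<Sum>k=lo..hi. l ^ k / fact k)"
  shows "exp (-1) \<le> poisson_conc l"
proof -
  have "exp (-1) = exp (-l) * exp (l - 1)"
    by (simp flip: exp_add)
  also have "\<dots> \<le> exp (-l) * (\<Sum>k=lo..hi. l ^ k / fact k)"
    using exp_le by simp
  also have "\<dots> = (\<Sum>k=lo..hi. pmf (poisson_pmf l) k)"
    using l by (simp add: sum_distrib_left mult_ac)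
  also have "\<dots> \<le> poisson_conc l"
    by (rule sum_poisson_le_poisson_conc[OF l window])
  finally show ?thesis .
qed

lemma exp_minus_one_le_poisson_conc_below_one:
  assumes "0 < l" "l < 1"
  shows "exp (-1) \<le> poisson_conc l"
proof (rule exp_minus_one_le_poisson_conc_if_window[of l 0 0])
  have "sqrt l * sqrt l < 1 * sqrt l"
    using assms by (intro mult_strict_right_mono) auto
  then have "l < sqrt l"
    using assms by simp
  then show "{0..0} \<subseteq> poisson_window l"
    using assms by (simp add: poisson_window_def)
qed (use assms in simp_all)

lemma exp_le_if_power_le:
  fixes x y u :: real and m q :: nat
  assumes "exp 1 \<le> u" "0 \<le> y" "0 < q" "x * real q = real m" "u ^ m \<le> y ^ q"
  shows "exp x \<le> y"
proof -
  have "exp x ^ q = exp 1 ^ m"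
    using assms(4) by (simp flip: exp_of_nat_mult add: mult.commute)
  also have "\<dots> \<le> y ^ q"
    using assms(1,5) by (meson exp_ge_zero order.trans power_mono)
  finally show ?thesis
    using assms(2,3) by (simp add: power_mono_iff)
qed

lemma exp_one_bounds: "2718 / 1000 \<le> exp (1::real)" "exp (1::real) \<le> 27183 / 10000"
  using e_approx_32 by (simp_all add: abs_if split: if_splits)

lemma exp_minus_one_le_poisson_conc_one_to_five_quarters:
  assumes "1 < l" "l \<le> 5/4"
  shows "exp (-1) \<le> poisson_conc l"
proof (rule exp_minus_one_le_poisson_conc_if_window[of l 1 2])
  show "{1..2} \<subseteq> poisson_window l"
  proof
    fix k :: nat assume "k \<in> {1..2}"
    then have "real k = 1 \<or> real k = 2"
      by auto
    moreover have "1 < sqrt l"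
      using assms by simp
    ultimately show "k \<in> poisson_window l"
      using assms unfolding poisson_window_def mem_Collect_eq abs_less_iff by linarith
  qed
  have "exp (l - 1) \<le> exp (1/4)"
    using assms by simp
  also have "\<dots> \<le> 3/2"
    by (rule exp_le_if_power_le[OF exp_one_bounds(2), where q = 4 and m = 1]) (simp_all add: power_divide)
  also have "\<dots> \<le> l + l\<^sup>2 / 2"
    using assms one_le_power[of l 2] by linarith
  also have "\<dots> = (\<Sum>k=1..2. l ^ k / fact k)"
    by (simp add: numeral_2_eq_2)
  finally show "exp (l - 1) \<le> (\<Sum>k=1..2. l ^ k / fact k)" .
qed (use assms in simp)

lemma diff_sqrt_mono:
  fixes x y :: real
  assumes "1/4 \<le> x" "x \<le> y"
  shows "x - sqrt x \<le> y - sqrt y"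
proof -
  have "(1/2)\<^sup>2 \<le> x"
    using assms(1) by (simp add: power_divide)
  then have half: "1/2 \<le> sqrt x"
    by (rule real_le_rsqrt)
  have mono: "sqrt x \<le> sqrt y"
    using assms by simp
  have "(sqrt y - sqrt x) * 1 \<le> (sqrt y - sqrt x) * (sqrt y + sqrt x)"
    using half mono by (intro mult_left_mono) linarith+
  also have "\<dots> = y - x"
    using assms by (simp add: algebra_simps)
  finally show ?thesis
    by simp
qed

(* The squared hypotheses say d - sqrt d < lo and hi < c + sqrt c without mentioning sqrt. *)
lemma exp_minus_one_le_poisson_conc_interval:
  fixes c d l :: real and lo hi :: nat
  assumes c: "1 \<le> c" "c \<le> l" and d: "l \<le> d"
    and lo: "(d - real lo)\<^sup>2 < d" and hi: "(real hi - c)\<^sup>2 < c"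
    and exp_le: "exp (d - 1) \<le> (\<Sum>k=lo..hi. c ^ k / fact k)"
  shows "exp (-1) \<le> poisson_conc l"
proof (rule exp_minus_one_le_poisson_conc_if_window)
  show "l > 0"
    using c by simp
  show "{lo..hi} \<subseteq> poisson_window l"
  proof
    fix k assume "k \<in> {lo..hi}"
    then have "real lo \<le> real k" "real k \<le> real hi"
      by auto
    moreover have "l - sqrt l \<le> d - sqrt d"
      using c d by (intro diff_sqrt_mono) auto
    moreover have "d - real lo < sqrt d"
      using lo by (rule real_less_rsqrt)
    moreover have "real hi - c < sqrt c"
      using hi by (rule real_less_rsqrt)
    moreover have "sqrt c \<le> sqrt l"
      using c by simp
    ultimately show "k \<in> poisson_window l"
      using c unfolding poisson_window_def mem_Collect_eq abs_less_iff by linarith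
  qed
  have "exp (l - 1) \<le> exp (d - 1)"
    using d by simp
  also have "\<dots> \<le> (\<Sum>k=lo..hi. c ^ k / fact k)"
    by (rule exp_le)
  also have "\<dots> \<le> (\<Sum>k=lo..hi. l ^ k / fact k)"
    using c by (intro sum_mono divide_right_mono power_mono) auto
  finally show "exp (l - 1) \<le> (\<Sum>k=lo..hi. l ^ k / fact k)" .
qed

(* With d = 1 + m/4 and e < 2.7183, the bound exp (d - 1) <= S follows from the rational
   inequality 2.7183^m <= S^4, which simp decides. *)
lemma exp_minus_one_le_poisson_conc_by_certificate:
  fixes c d l :: real and lo hi m :: nat
  assumes "c \<le> l" "l \<le> d" "1 \<le> c" "(d - real lo)\<^sup>2 < d" "(real hi - c)\<^sup>2 < c"
    and "(d - 1) * 4 = real m" "(27183 / 10000) ^ m \<le> (\<Sum>k=lo..hi. c ^ k / fact k) ^ 4"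
  shows "exp (-1) \<le> poisson_conc l"
proof (rule exp_minus_one_le_poisson_conc_interval[OF assms(3,1,2,4,5)])
  show "exp (d - 1) \<le> (\<Sum>k=lo..hi. c ^ k / fact k)"
    using assms(3,6,7) by (intro exp_le_if_power_le[OF exp_one_bounds(2)] sum_nonneg) auto
qed

lemma exp_minus_one_le_poisson_conc_five_quarters_to_six:
  assumes "5/4 \<le> l" "l \<le> 6"
  shows "exp (-1) \<le> poisson_conc l"
proof -
  note certificate = exp_minus_one_le_poisson_conc_by_certificate[where l = l]
  consider "5/4 \<le> l" "l \<le> 3/2" | "3/2 \<le> l" "l \<le> 7/4"
    | "7/4 \<le> l" "l \<le> 9/4" | "9/4 \<le> l" "l \<le> 5/2"
    | "5/2 \<le> l" "l \<le> 11/4" | "11/4 \<le> l" "l \<le> 13/4"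
    | "13/4 \<le> l" "l \<le> 15/4" | "15/4 \<le> l" "l \<le> 4"
    | "4 \<le> l" "l \<le> 17/4" | "17/4 \<le> l" "l \<le> 19/4"
    | "19/4 \<le> l" "l \<le> 21/4" | "21/4 \<le> l" "l \<le> 23/4"
    | "23/4 \<le> l" "l \<le> 6"
    using assms by argo
  then show ?thesis
  proof cases
    case 1 then show ?thesis by (rule certificate[of "5/4" "3/2" 1 2 2]) (simp_all add: numeral_eq_Suc)
  next
    case 2 then show ?thesis by (rule certificate[of "3/2" "7/4" 1 2 3]) (simp_all add: numeral_eq_Suc)
  next
    case 3 then show ?thesis by (rule certificate[of "7/4" "9/4" 1 3 5]) (simp_all add: numeral_eq_Suc)
  next
    case 4 then show ?thesis by (rule certificate[of "9/4" "5/2" 1 3 6]) (simp_all add: numeral_eq_Suc)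
  next
    case 5 then show ?thesis by (rule certificate[of "5/2" "11/4" 2 4 7]) (simp_all add: numeral_eq_Suc)
  next
    case 6 then show ?thesis by (rule certificate[of "11/4" "13/4" 2 4 9]) (simp_all add: numeral_eq_Suc)
  next
    case 7 then show ?thesis by (rule certificate[of "13/4" "15/4" 2 5 11]) (simp_all add: numeral_eq_Suc)
  next
    case 8 then show ?thesis by (rule certificate[of "15/4" "4" 3 5 12]) (simp_all add: numeral_eq_Suc)
  next
    case 9 then show ?thesis by (rule certificate[of "4" "17/4" 3 5 13]) (simp_all add: numeral_eq_Suc)
  next
    case 10 then show ?thesis by (rule certificate[of "17/4" "19/4" 3 6 15]) (simp_all add: numeral_eq_Suc)
  next
    case 11 then show ?thesis by (rule certificate[of "19/4" "21/4" 3 6 17]) (simp_all add: numeral_eq_Suc)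
  next
    case 12 then show ?thesis by (rule certificate[of "21/4" "23/4" 4 7 19]) (simp_all add: numeral_eq_Suc)
  next
    case 13 then show ?thesis by (rule certificate[of "23/4" "6" 4 8 20]) (simp_all add: numeral_eq_Suc)
  qed
qed

lemma poisson_pmf_mono_below:
  assumes l: "l > 0" and "i \<le> j" "real j \<le> l"
  shows "pmf (poisson_pmf l) i \<le> pmf (poisson_pmf l) j"
  using \<open>i \<le> j\<close>
proof (induction rule: dec_induct)
  case (step n)
  have "real (Suc n) * pmf (poisson_pmf l) n \<le> l * pmf (poisson_pmf l) n"
    using step.hyps(2) \<open>real j \<le> l\<close> by (intro mult_right_mono) auto
  then have "pmf (poisson_pmf l) n \<le> pmf (poisson_pmf l) (Suc n)"
    unfolding pmf_poisson_Suc[OF l, symmetric] by (simp del: of_nat_Suc)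
  with step.IH show ?case
    by linarith
qed simp

lemma poisson_pmf_antimono_above:
  assumes l: "l > 0" and "i \<le> j" "l \<le> real i + 1"
  shows "pmf (poisson_pmf l) j \<le> pmf (poisson_pmf l) i"
  using \<open>i \<le> j\<close>
proof (induction rule: dec_induct)
  case (step n)
  have "l * pmf (poisson_pmf l) n \<le> real (Suc n) * pmf (poisson_pmf l) n"
    using step.hyps(1) \<open>l \<le> real i + 1\<close> by (intro mult_right_mono) auto
  then have "pmf (poisson_pmf l) (Suc n) \<le> pmf (poisson_pmf l) n"
    unfolding pmf_poisson_Suc[OF l, symmetric] by (simp del: of_nat_Suc)
  with step.IH show ?case
    by linarith
qed simp

lemma poisson_lower_tail_le:
  assumes l: "l > 0" and "real m \<le> l - sqrt l"
  shows "(\<Sum>k\<le>m. pmf (poisson_pmf l) k) \<le> sqrt l * pmf (poisson_pmf l) m"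
  using \<open>real m \<le> l - sqrt l\<close>
proof (induction m)
  case 0
  have "sqrt l * 1 \<le> sqrt l * sqrt l"
    using 0 l by simp
  then have "1 \<le> sqrt l"
    using l by (subst (asm) mult_le_cancel_left_pos) auto
  then show ?case
    using mult_right_mono[of 1 "sqrt l" "pmf (poisson_pmf l) 0"] by simp
next
  case (Suc m)
  let ?p = "pmf (poisson_pmf l)"
  have "l * (sqrt l * ?p m) = sqrt l * (real (Suc m) * ?p (Suc m))"
    using pmf_poisson_Suc[OF l, of m] by (simp add: ac_simps)
  also have "\<dots> \<le> sqrt l * ((l - sqrt l) * ?p (Suc m))"
    using Suc.prems l by (intro mult_left_mono mult_right_mono) auto
  also have "\<dots> = l * ((sqrt l - 1) * ?p (Suc m))"
    using l by (simp add: algebra_simps)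
  finally have step: "sqrt l * ?p m \<le> (sqrt l - 1) * ?p (Suc m)"
    by (simp only: mult_le_cancel_left_pos[OF l])
  have "(\<Sum>k\<le>Suc m. ?p k) = (\<Sum>k\<le>m. ?p k) + ?p (Suc m)"
    by simp
  also have "\<dots> \<le> sqrt l * ?p m + ?p (Suc m)"
    using Suc by simp
  also have "\<dots> \<le> sqrt l * ?p (Suc m)"
    using step by (simp add: algebra_simps)
  finally show ?case .
qed

lemma poisson_upper_tail_le:
  assumes l: "l > 0" and b: "l + sqrt l \<le> real b + 1"
  shows "(\<Sum>j. pmf (poisson_pmf l) (j + Suc b)) \<le> sqrt l * pmf (poisson_pmf l) b"
proof -
  let ?p = "pmf (poisson_pmf l)"
  let ?T = "\<Sum>j. ?p (j + Suc b)"
  have summable: "summable (\<lambda>j. ?p (j + k))" for k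
    using poisson_pmf_sums(1)[OF l] by (intro summable_ignore_initial_segment sums_summable)
  have ratio: "(l + sqrt l) * ?p (j + Suc b) \<le> l * ?p (j + b)" for j
  proof -
    have "(l + sqrt l) * ?p (Suc (j + b)) \<le> real (Suc (j + b)) * ?p (Suc (j + b))"
      using b by (intro mult_right_mono) auto
    then show ?thesis
      unfolding pmf_poisson_Suc[OF l] by simp
  qed
  have "(l + sqrt l) * ?T = (\<Sum>j. (l + sqrt l) * ?p (j + Suc b))"
    by (rule suminf_mult[OF summable, symmetric])
  also have "\<dots> \<le> (\<Sum>j. l * ?p (j + b))"
    using summable by (intro suminf_le ratio summable_mult)
  also have "\<dots> = l * (\<Sum>j. ?p (j + b))"
    by (rule suminf_mult[OF summable])
  also have "(\<Sum>j. ?p (j + b)) = ?p b + ?T"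
    using suminf_split_head[OF summable[of b]] by simp
  finally have "sqrt l * ?T \<le> sqrt l * sqrt l * ?p b"
    using l by (simp add: algebra_simps del: pmf_poisson)
  then show ?thesis
    using l by (simp only: mult.assoc mult_le_cancel_left_pos real_sqrt_gt_zero)
qed

lemma poisson_central_sum_ge:
  assumes l: "1 < l" and m: "real m \<le> l - sqrt l" and b: "l + sqrt l \<le> real b + 1"
  shows "(sqrt l - 1) * (pmf (poisson_pmf l) (Suc m) + pmf (poisson_pmf l) b)
    \<le> (\<Sum>k=Suc m..b. pmf (poisson_pmf l) k)"
proof -
  let ?p = "pmf (poisson_pmf l)"
  define n where "n = nat \<lfloor>l\<rfloor>"
  have n: "real n \<le> l" "l < real n + 1"
    using l by (simp_all add: n_def)
  have "1 < sqrt l"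
    using l by simp
  then have mn: "m < n" and nb: "n \<le> b"
    using m n b by linarith+
  have "(sqrt l - 1) * ?p (Suc m) \<le> real (card {Suc m..n}) * ?p (Suc m)"
    using m n by (intro mult_right_mono) auto
  also have "\<dots> \<le> (\<Sum>k=Suc m..n. ?p k)"
    using n l by (intro sum_bounded_below poisson_pmf_mono_below) auto
  finally have left: "(sqrt l - 1) * ?p (Suc m) \<le> (\<Sum>k=Suc m..n. ?p k)" .
  have "(sqrt l - 1) * ?p b \<le> real (card {Suc n..b}) * ?p b"
    using nb n b by (intro mult_right_mono) (auto simp: of_nat_diff)
  also have "\<dots> \<le> (\<Sum>k=Suc n..b. ?p k)"
    using n l by (intro sum_bounded_below poisson_pmf_antimono_above) auto
  finally have right: "(sqrt l - 1) * ?p b \<le> (\<Sum>k=Suc n..b. ?p k)" .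
  have "{Suc m..b} = {Suc m..n} \<union> {Suc n..b}"
    using mn nb by auto
  then have "(\<Sum>k=Suc m..b. ?p k) = (\<Sum>k=Suc m..n. ?p k) + (\<Sum>k=Suc n..b. ?p k)"
    by (simp add: sum.union_disjoint)
  with left right show ?thesis
    by (simp add: distrib_left)
qed

lemma poisson_mass_split:
  assumes l: "l > 0" and "m \<le> b"
  shows "(\<Sum>k\<le>m. pmf (poisson_pmf l) k) + (\<Sum>k=Suc m..b. pmf (poisson_pmf l) k)
    + (\<Sum>j. pmf (poisson_pmf l) (j + Suc b)) = 1"
proof -
  let ?p = "pmf (poisson_pmf l)"
  have "1 = (\<Sum>j. ?p (j + Suc b)) + (\<Sum>k<Suc b. ?p k)"
    using poisson_pmf_sums(1)[OF l]
    by (metis sums_iff suminf_split_initial_segment)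
  also have "(\<Sum>k<Suc b. ?p k) = (\<Sum>k\<le>m. ?p k) + (\<Sum>k=Suc m..b. ?p k)"
    using sum_up_index_split[of ?p m "b - m"] \<open>m \<le> b\<close> by (simp add: lessThan_Suc_atMost)
  finally show ?thesis
    by simp
qed

lemma exp_minus_one_le_poisson_central_sum:
  assumes l: "1 < l" and key: "sqrt l \<le> (exp 1 - 1) * (sqrt l - 1)"
    and m: "real m \<le> l - sqrt l" and b: "l + sqrt l \<le> real b + 1"
  shows "exp (-1) \<le> (\<Sum>k=Suc m..b. pmf (poisson_pmf l) k)"
proof -
  let ?p = "pmf (poisson_pmf l)"
  let ?S = "\<Sum>k=Suc m..b. ?p k"
  have "1 < sqrt l"
    using l by simp
  then have "real m \<le> real b"
    using m b by linarith
  then have "m \<le> b"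
    by simp
  have "real (Suc m) \<le> l"
    using m \<open>1 < sqrt l\<close> by linarith
  then have "?p m \<le> ?p (Suc m)"
    using l by (intro poisson_pmf_mono_below) auto
  then have "sqrt l * ?p m + sqrt l * ?p b \<le> sqrt l * (?p (Suc m) + ?p b)"
    using l by (simp add: distrib_left mult_left_mono del: pmf_poisson)
  then have "(\<Sum>k\<le>m. ?p k) + (\<Sum>j. ?p (j + Suc b)) \<le> sqrt l * (?p (Suc m) + ?p b)"
    using poisson_lower_tail_le[OF _ m] poisson_upper_tail_le[OF _ b] l by simp
  also have "\<dots> \<le> (exp 1 - 1) * ((sqrt l - 1) * (?p (Suc m) + ?p b))"
    using key by (simp add: mult.assoc[symmetric] mult_right_mono)
  also have "\<dots> \<le> (exp 1 - 1) * ?S"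
    using poisson_central_sum_ge[OF l m b] exp_one_bounds(1) by (intro mult_left_mono) auto
  finally have "1 \<le> exp 1 * ?S"
    using poisson_mass_split[of l m b] l \<open>m \<le> b\<close> by (simp add: algebra_simps)
  then show ?thesis
    by (simp add: exp_minus field_simps)
qed

lemma exp_minus_one_le_poisson_conc_large:
  assumes l: "1 < l" and key: "sqrt l \<le> (exp 1 - 1) * (sqrt l - 1)"
  shows "exp (-1) \<le> poisson_conc l"
proof -
  define m where "m = nat \<lfloor>l - sqrt l\<rfloor>"
  define b where "b = nat \<lceil>l + sqrt l\<rceil> - 1"
  have "sqrt l * 1 \<le> sqrt l * sqrt l"
    using l by (intro mult_left_mono) auto
  then have "sqrt l \<le> l"
    using l by simp
  then have m: "real m \<le> l - sqrt l" "l - sqrt l < real m + 1"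
    unfolding m_def by linarith+
  have "1 \<le> \<lceil>l + sqrt l\<rceil>"
    using l by (simp add: add_pos_nonneg)
  then have "int b = \<lceil>l + sqrt l\<rceil> - 1"
    unfolding b_def by linarith
  then have "real b = of_int \<lceil>l + sqrt l\<rceil> - 1"
    by (metis of_int_diff of_int_of_nat_eq of_int_1)
  then have b: "real b < l + sqrt l" "l + sqrt l \<le> real b + 1"
    by linarith+
  have "{Suc m..b} \<subseteq> poisson_window l"
    using m b by (auto simp: poisson_window_def abs_less_iff)
  then have "(\<Sum>k=Suc m..b. pmf (poisson_pmf l) k) \<le> poisson_conc l"
    using l by (intro sum_poisson_le_poisson_conc) auto
  moreover have "exp (-1) \<le> (\<Sum>k=Suc m..b. pmf (poisson_pmf l) k)"
    using l key m(1) b(2) by (rule exp_minus_one_le_poisson_central_sum)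
  ultimately show ?thesis
    by linarith
qed

lemma exp_minus_one_le_poisson_conc_ge_six:
  assumes "6 \<le> l"
  shows "exp (-1) \<le> poisson_conc l"
proof (rule exp_minus_one_le_poisson_conc_large)
  have "(2449/1000)\<^sup>2 \<le> l"
    using assms by (simp add: power_divide)
  then have s: "2449/1000 \<le> sqrt l"
    by (rule real_le_rsqrt)
  have "0 \<le> (exp 1 - 2) * (sqrt l - 2449/1000)"
    using s exp_one_bounds(1) by (intro mult_nonneg_nonneg) auto
  moreover have "(exp 1 - 1) * (sqrt l - 1) - sqrt l
      = (exp 1 - 2) * (sqrt l - 2449/1000) + (1449/1000 * exp 1 - 3898/1000)"
    by (simp add: field_simps)
  ultimately show "sqrt l \<le> (exp 1 - 1) * (sqrt l - 1)"
    using exp_one_bounds(1) by linarith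
qed (use assms in simp)

lemma exp_minus_one_le_poisson_conc:
  assumes "l > 0"
  shows "exp (-1) \<le> poisson_conc l"
proof -
  consider "l < 1" | "l = 1" | "1 < l" "l \<le> 5/4" | "5/4 \<le> l" "l \<le> 6" | "6 \<le> l"
    by linarith
  then show ?thesis
  proof cases
    case 1
    with assms show ?thesis by (rule exp_minus_one_le_poisson_conc_below_one)
  next
    case 2
    then show ?thesis by (simp add: poisson_conc_one)
  next
    case 3
    then show ?thesis by (rule exp_minus_one_le_poisson_conc_one_to_five_quarters)
  next
    case 4
    then show ?thesis by (rule exp_minus_one_le_poisson_conc_five_quarters_to_six)
  next
    case 5
    then show ?thesis by (rule exp_minus_one_le_poisson_conc_ge_six)
  qed
qed

lemma INF_poisson_conc: "(INF l\<in>{0<..}. poisson_conc l) = poisson_conc 1"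
proof (rule cInf_eq_minimum)
  show "poisson_conc 1 \<in> poisson_conc ` {0<..}"
    by simp
next
  fix x assume "x \<in> poisson_conc ` {0<..}"
  then show "poisson_conc 1 \<le> x"
    using exp_minus_one_le_poisson_conc by (auto simp: poisson_conc_one)
qed

lemma poisson_pmf_add:
  assumes a: "a > 0" and b: "b > 0"
  shows "map_pmf (\<lambda>(x, y). x + y) (pair_pmf (poisson_pmf a) (poisson_pmf b)) = poisson_pmf (a + b)"
proof (rule pmf_eqI)
  fix w :: nat
  have "(\<lambda>(x, y). x + y) -` {w} = (\<lambda>i. (i, w - i)) ` {..w}"
    by auto
  then have "pmf (map_pmf (\<lambda>(x, y). x + y) (pair_pmf (poisson_pmf a) (poisson_pmf b))) w
      = (\<Sum>z\<in>(\<lambda>i. (i, w - i)) ` {..w}. pmf (pair_pmf (poisson_pmf a) (poisson_pmf b)) z)"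
    by (simp add: pmf_map measure_measure_pmf_finite)
  also have "\<dots> = (\<Sum>i\<le>w. pmf (poisson_pmf a) i * pmf (poisson_pmf b) (w - i))"
    by (subst sum.reindex) (auto simp: inj_on_def pmf_pair)
  also have "\<dots> = (\<Sum>i\<le>w. real (w choose i) * a ^ i * b ^ (w - i)) / fact w * exp (-(a + b))"
    unfolding sum_distrib_right sum_divide_distrib
  proof (rule sum.cong[OF refl])
    fix i assume "i \<in> {..w}"
    then have "real (w choose i) = fact w / (fact i * fact (w - i))"
      by (simp add: binomial_fact)
    then show "pmf (poisson_pmf a) i * pmf (poisson_pmf b) (w - i)
        = real (w choose i) * a ^ i * b ^ (w - i) / fact w * exp (-(a + b))"
      using a b by (simp add: field_simps exp_add[symmetric] exp_diff)
  qed
  also have "\<dots> = pmf (poisson_pmf (a + b)) w"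
    using a b by (simp add: binomial_ring)
  finally show "pmf (map_pmf (\<lambda>(x, y). x + y) (pair_pmf (poisson_pmf a) (poisson_pmf b))) w
      = pmf (poisson_pmf (a + b)) w" .
qed

definition poisson_measure :: "real \<Rightarrow> real measure" where
  "poisson_measure l = distr (measure_pmf (poisson_pmf l)) borel real"

lemma prob_space_poisson_measure: "prob_space (poisson_measure l)"
  unfolding poisson_measure_def
  by (rule prob_space.prob_space_distr) (auto simp: prob_space_measure_pmf)

lemma sets_poisson_measure [simp, measurable_cong]: "sets (poisson_measure l) = sets borel"
  by (simp add: poisson_measure_def)

lemma nn_integral_poisson_measure:
  assumes "f \<in> borel_measurable borel"
  shows "(\<integral>\<^sup>+y. f y \<partial>poisson_measure l) = (\<integral>\<^sup>+k. f (real k) \<partial>measure_pmf (poisson_pmf l))"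
  unfolding poisson_measure_def using assms by (subst nn_integral_distr) auto

lemma nn_integral_poisson_measure_add:
  assumes a: "a > 0" and b: "b > 0" and [measurable]: "f \<in> borel_measurable borel"
  shows "(\<integral>\<^sup>+x. \<integral>\<^sup>+y. f (x + y) \<partial>poisson_measure b \<partial>poisson_measure a)
    = (\<integral>\<^sup>+z. f z \<partial>poisson_measure (a + b))"
proof -
  interpret sigma_finite_measure "poisson_measure b"
    by (simp add: prob_space_imp_sigma_finite prob_space_poisson_measure)
  have "(\<integral>\<^sup>+x. \<integral>\<^sup>+y. f (x + y) \<partial>poisson_measure b \<partial>poisson_measure a)
      = (\<integral>\<^sup>+j. \<integral>\<^sup>+k. f (real (j + k)) \<partial>measure_pmf (poisson_pmf b) \<partial>measure_pmf (poisson_pmf a))"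
    by (simp add: nn_integral_poisson_measure)
  also have "\<dots> = (\<integral>\<^sup>+z. f (real z)
      \<partial>measure_pmf (map_pmf (\<lambda>(x, y). x + y) (pair_pmf (poisson_pmf a) (poisson_pmf b))))"
    by (simp add: nn_integral_pair_pmf' case_prod_beta)
  also have "\<dots> = (\<integral>\<^sup>+z. f z \<partial>poisson_measure (a + b))"
    by (simp add: poisson_pmf_add[OF a b] nn_integral_poisson_measure)
  finally show ?thesis .
qed

lemma nn_integral_sum_PiM_poisson_measure:
  assumes t: "t > 0" and "0 < n" and "f \<in> borel_measurable borel"
  shows "(\<integral>\<^sup>+x. f (\<Sum>i<n. x i) \<partial>PiM {..<n} (\<lambda>_. poisson_measure t))
    = (\<integral>\<^sup>+y. f y \<partial>poisson_measure (real n * t))"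
proof -
  interpret product_sigma_finite "\<lambda>_. poisson_measure t"
    by (simp add: product_sigma_finite_def prob_space_imp_sigma_finite prob_space_poisson_measure)
  interpret sigma_finite_measure "poisson_measure t"
    by (simp add: prob_space_imp_sigma_finite prob_space_poisson_measure)
  show ?thesis
    using \<open>0 < n\<close> \<open>f \<in> borel_measurable borel\<close>
  proof (induction n arbitrary: f rule: nat_induct_non_zero)
    case 1
    then show ?case
      using product_nn_integral_singleton[of f 0] by (simp add: lessThan_Suc)
  next
    case (Suc n)
    note [measurable] = Suc.prems
    define h where "h s = (\<integral>\<^sup>+y. f (s + y) \<partial>poisson_measure t)" for s
    have [measurable]: "h \<in> borel_measurable borel"
      unfolding h_def by measurable
    have "(\<integral>\<^sup>+x. f (\<Sum>i<Suc n. x i) \<partial>PiM {..<Suc n} (\<lambda>_. poisson_measure t))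
        = (\<integral>\<^sup>+x. \<integral>\<^sup>+y. f (\<Sum>i<Suc n. (x(n := y)) i) \<partial>poisson_measure t
          \<partial>PiM {..<n} (\<lambda>_. poisson_measure t))"
      unfolding lessThan_Suc by (rule product_nn_integral_insert) auto
    also have "\<dots> = (\<integral>\<^sup>+x. h (\<Sum>i<n. x i) \<partial>PiM {..<n} (\<lambda>_. poisson_measure t))"
      by (intro nn_integral_cong) (simp add: h_def)
    also have "\<dots> = (\<integral>\<^sup>+s. h s \<partial>poisson_measure (real n * t))"
      by (rule Suc.IH) measurable
    also have "\<dots> = (\<integral>\<^sup>+z. f z \<partial>poisson_measure (real n * t + t))"
      unfolding h_def using Suc.hyps t by (intro nn_integral_poisson_measure_add) auto
    finally show ?case
      by (simp add: algebra_simps)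
  qed
qed

lemma distr_sum_PiM_poisson_measure:
  assumes "t > 0" "0 < n"
  shows "distr (PiM {..<n} (\<lambda>_. poisson_measure t)) borel (\<lambda>x. \<Sum>i<n. x i)
    = poisson_measure (real n * t)"
proof (rule measure_eqI)
  fix A assume "A \<in> sets (distr (PiM {..<n} (\<lambda>_. poisson_measure t)) borel (\<lambda>x. \<Sum>i<n. x i))"
  then have [measurable]: "A \<in> sets borel"
    by simp
  have "emeasure (distr (PiM {..<n} (\<lambda>_. poisson_measure t)) borel (\<lambda>x. \<Sum>i<n. x i)) A
      = (\<integral>\<^sup>+y. indicator A y
          \<partial>distr (PiM {..<n} (\<lambda>_. poisson_measure t)) borel (\<lambda>x. \<Sum>i<n. x i))"
    by (rule nn_integral_indicator[symmetric]) simp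
  also have "\<dots> = (\<integral>\<^sup>+x. indicator A (\<Sum>i<n. x i) \<partial>PiM {..<n} (\<lambda>_. poisson_measure t))"
    by (rule nn_integral_distr) measurable
  also have "\<dots> = (\<integral>\<^sup>+y. indicator A y \<partial>poisson_measure (real n * t))"
    using assms by (intro nn_integral_sum_PiM_poisson_measure) auto
  also have "\<dots> = emeasure (poisson_measure (real n * t)) A"
    by simp
  finally show "emeasure (distr (PiM {..<n} (\<lambda>_. poisson_measure t)) borel (\<lambda>x. \<Sum>i<n. x i)) A
      = emeasure (poisson_measure (real n * t)) A" .
qed simp

lemma inf_divisible_poisson_measure:
  assumes "l > 0"
  shows "inf_divisible (poisson_measure l)"
  unfolding inf_divisible_def
proof (intro conjI allI impI)
  fix n :: nat assume "n \<ge> 1"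
  then have "poisson_measure l
      = distr (PiM {..<n} (\<lambda>_. poisson_measure (l / n))) borel (\<lambda>x. \<Sum>i<n. x i)"
    using assms by (subst distr_sum_PiM_poisson_measure) auto
  then show "\<exists>\<nu>. prob_space \<nu> \<and> sets \<nu> = sets borel \<and>
      poisson_measure l = distr (PiM {..<n} (\<lambda>_. \<nu>)) borel (\<lambda>x. \<Sum>i<n. x i)"
    by (intro exI[of _ "poisson_measure (l / n)"]) (simp add: prob_space_poisson_measure)
qed (simp_all add: prob_space_poisson_measure)

lemma
  assumes "l > 0"
  shows integrable_poisson_measure_square: "integrable (poisson_measure l) (\<lambda>x. x\<^sup>2)"
    and expectation_poisson_measure: "(\<integral>x. x \<partial>poisson_measure l) = l"
    and variance_poisson_measure: "prob_space.variance (poisson_measure l) (\<lambda>x. x) = l"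
  using assms variance_poisson_pmf[OF assms, unfolded expectation_poisson_pmf[OF assms]]
  by (simp_all add: poisson_measure_def integrable_distr_eq integral_distr
      integrable_poisson_pmf_square expectation_poisson_pmf)

lemma poisson_measure_in_I0:
  assumes "l > 0"
  shows "poisson_measure l \<in> I0"
  using assms by (simp add: I0_def inf_divisible_poisson_measure
      integrable_poisson_measure_square variance_poisson_measure)

lemma measure_poisson_measure_window:
  assumes "l > 0"
  shows "measure (poisson_measure l)
      {x. \<bar>x - (\<integral>x. x \<partial>poisson_measure l)\<bar> < sqrt (prob_space.variance (poisson_measure l) (\<lambda>x. x))}
    = poisson_conc l"
  unfolding variance_poisson_measure[OF assms] poisson_conc_def variance_poisson_pmf[OF assms]
  unfolding expectation_poisson_measure[OF assms] expectation_poisson_pmf[OF assms]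
  by (simp add: poisson_measure_def measure_distr vimage_def)

lemma P_I0_le_exp_minus_one: "P_I0 \<le> exp (-1)"
  unfolding P_I0_def
proof (rule cINF_lower2[OF _ poisson_measure_in_I0[of 1]])
  show "bdd_below ((\<lambda>\<mu>. measure \<mu> {x. \<bar>x - (\<integral>x. x \<partial>\<mu>)\<bar> < sqrt (prob_space.variance \<mu> (\<lambda>x. x))}) ` I0)"
    by (rule bdd_belowI[of _ 0]) auto
qed (simp_all add: measure_poisson_measure_window poisson_conc_one)

theorem theorem4p2:
  shows "(INF l\<in>{0<..}. poisson_conc l) = poisson_conc 1 \<and>
         poisson_conc 1 = exp (-1) \<and>
         P_I0 \<le> exp (-1)"
  using INF_poisson_conc poisson_conc_one P_I0_le_exp_minus_one by blast

end
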